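(* For an integer $i\ge0$ let $i_0i_1i_2\dots$ be its base-3 digits, least significant first. Define $w_i=-1$ if the first digit in this sequence different from $1$ is $2$, and $w_i=1$ otherwise; define $a_i=3^{m}$, where $m$ is the number of initial digits equal to $1$, i.e. the largest $m\ge0$ with $i_0=\dots=i_{m-1}=1$. Let $p_0=0$ and $p_n=\sum_{i=0}^{n-1}w_ia_i$ for $n\ge1$. Let $N_2$ be the set of non-negative integers whose base-3 representation does not use the digit $2$, and for $n\ge0$ let $\ell_n=\ell_n^++\ell_n^-$, where $\ell_n^+,\ell_n^-$ are the unique non-negative integers with $\ell_n^+,\ell_n^-,\ell_n^++\ell_n^-\in N_2$ and $n=\ell_n^+-\ell_n^-$. Then $p_n=\ell_n$ for all $n\ge0$.
   Context: The sequence $(w_i)$ is the sequence $1,1,-1,1,1,-1,1,-1,-1,\dots$ (the final-state output of a ternary automaton), and $(a_i)$ is the sequence $1,3,1,1,9,1,\dots$ (a transducer integer sequence); the definitions above are the explicit descriptions of these. *)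

theory Defs
  imports Main
begin

definition digit3 :: "nat \<Rightarrow> nat \<Rightarrow> nat" where
  "digit3 i k = (i div 3 ^ k) mod 3"

definition ones_prefix :: "nat \<Rightarrow> nat" where
  "ones_prefix i = (LEAST k. digit3 i k \<noteq> 1)"

definition w :: "nat \<Rightarrow> int" where
  "w i = (if digit3 i (ones_prefix i) = 2 then -1 else 1)"

definition a :: "nat \<Rightarrow> int" where
  "a i = 3 ^ ones_prefix i"

definition p :: "nat \<Rightarrow> int" where
  "p n = (\<Sum>i<n. w i * a i)"

definition N2 :: "nat set" where
  "N2 = {x. \<forall>k. digit3 x k \<noteq> 2}"

definition ell_pair :: "nat \<Rightarrow> nat \<times> nat" where
  "ell_pair n = (THE (lp, lm). lp \<in> N2 \<and> lm \<in> N2 \<and> lp + lm \<in> N2 \<and> int n = int lp - int lm)"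

definition ell :: "nat \<Rightarrow> nat" where
  "ell n = fst (ell_pair n) + snd (ell_pair n)"

end

theory Submission
  imports Defs
begin

text \<open>
  The pair \<open>(\<ell>\<^sup>+, \<ell>\<^sup>-)\<close> is the balanced ternary expansion of \<open>n\<close>, split into its
  digits \<open>+1\<close> and \<open>-1\<close>; so \<open>\<ell>\<^sub>n\<close> is that expansion with every digit replaced by its
  absolute value. Reading off the last digit gives \<open>\<ell>\<^sub>3\<^sub>m = 3\<ell>\<^sub>m\<close>,
  \<open>\<ell>\<^sub>3\<^sub>m\<^sub>+\<^sub>1 = 3\<ell>\<^sub>m + 1\<close> and \<open>\<ell>\<^sub>3\<^sub>m\<^sub>+\<^sub>2 = 3\<ell>\<^sub>m\<^sub>+\<^sub>1 + 1\<close>. Hence the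
  increment \<open>\<ell>\<^sub>n\<^sub>+\<^sub>1 - \<ell>\<^sub>n\<close> is \<open>1\<close> or \<open>-1\<close> for \<open>n \<equiv> 0\<close> or \<open>2 (mod 3)\<close>, and three times
  the increment at \<open>(n - 1) / 3\<close> for \<open>n \<equiv> 1 (mod 3)\<close>. The sequence \<open>w\<^sub>i a\<^sub>i\<close> obeys the
  same recursion, so both sequences of partial sums agree.
\<close>

lemma digit3_0: "digit3 i 0 = i mod 3"
  by (simp add: digit3_def)

lemma digit3_Suc: "digit3 i (Suc k) = digit3 (i div 3) k"
  by (simp add: digit3_def div_mult2_eq mult.commute)

lemma digit3_self: "digit3 i i = 0"
proof -
  have "i < 3 ^ i"
    by (induction i) auto
  then show ?thesis
    by (simp add: digit3_def)
qed

lemma ones_prefix_eq_0: "i mod 3 \<noteq> 1 \<Longrightarrow> ones_prefix i = 0"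
  unfolding ones_prefix_def by (rule Least_eq_0) (simp add: digit3_0)

lemma ones_prefix_eq_Suc: "i mod 3 = 1 \<Longrightarrow> ones_prefix i = Suc (ones_prefix (i div 3))"
  unfolding ones_prefix_def
  by (subst Least_Suc[of _ i]) (simp_all add: digit3_self digit3_0 digit3_Suc)

lemma w_mult_a_3: "w (3 * m) * a (3 * m) = 1"
  by (simp add: w_def a_def ones_prefix_eq_0 digit3_0)

lemma w_mult_a_3_plus_1: "w (3 * m + 1) * a (3 * m + 1) = 3 * (w m * a m)"
proof -
  have "(3 * m + 1) mod 3 = 1" "(3 * m + 1) div 3 = m"
    by presburger+
  then show ?thesis
    by (simp add: w_def a_def ones_prefix_eq_Suc digit3_Suc)
qed

lemma w_mult_a_3_plus_2: "w (3 * m + 2) * a (3 * m + 2) = -1"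
proof -
  have "(3 * m + 2) mod 3 = 2"
    by presburger
  then show ?thesis
    by (simp add: w_def a_def ones_prefix_eq_0 digit3_0)
qed

lemma nat_mod3_cases:
  fixes n :: nat
  obtains m where "n = 3 * m" | m where "n = 3 * m + 1" | m where "n = 3 * m + 2"
proof -
  have "n mod 3 = 0 \<or> n mod 3 = 1 \<or> n mod 3 = 2"
    by presburger
  then show ?thesis
    using that div_mult_mod_eq[of n 3] by (metis add.right_neutral mult.commute)
qed

lemma zero_in_N2: "0 \<in> N2"
  by (simp add: N2_def digit3_def)

lemma N2_iff: "x \<in> N2 \<longleftrightarrow> x mod 3 \<noteq> 2 \<and> x div 3 \<in> N2"
proof -
  have "(\<forall>k. digit3 x k \<noteq> 2) \<longleftrightarrow> digit3 x 0 \<noteq> 2 \<and> (\<forall>k. digit3 x (Suc k) \<noteq> 2)"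
    by (metis not0_implies_Suc)
  then show ?thesis
    by (simp add: N2_def digit3_0 digit3_Suc)
qed

lemma N2_3_mult_plus_iff: "d < 2 \<Longrightarrow> 3 * x + d \<in> N2 \<longleftrightarrow> x \<in> N2"
  by (subst N2_iff) simp

definition balanced_rep :: "nat \<Rightarrow> nat \<Rightarrow> nat \<Rightarrow> bool" where
  "balanced_rep n lp lm \<longleftrightarrow> lp \<in> N2 \<and> lm \<in> N2 \<and> lp + lm \<in> N2 \<and> int n = int lp - int lm"

lemma balanced_rep_append_digit:
  assumes rep: "balanced_rep m lp lm" and digits: "dp + dm < 2"
    and n: "int n = 3 * int m + int dp - int dm"
  shows "balanced_rep n (3 * lp + dp) (3 * lm + dm)"
proof -
  have sum: "3 * lp + dp + (3 * lm + dm) = 3 * (lp + lm) + (dp + dm)"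
    by simp
  have "3 * lp + dp \<in> N2" "3 * lm + dm \<in> N2" "3 * lp + dp + (3 * lm + dm) \<in> N2"
    unfolding sum
    using rep digits N2_3_mult_plus_iff[of dp lp] N2_3_mult_plus_iff[of dm lm]
      N2_3_mult_plus_iff[of "dp + dm" "lp + lm"]
    by (simp_all add: balanced_rep_def)
  then show ?thesis
    using rep n by (simp add: balanced_rep_def)
qed

lemma balanced_rep_exists: "\<exists>lp lm. balanced_rep n lp lm"
proof (induction n rule: less_induct)
  case (less n)
  show ?case
  proof (cases n rule: nat_mod3_cases)
    case (1 m)
    show ?thesis
    proof (cases "m = 0")
      case True
      then show ?thesis
        using 1 zero_in_N2 by (auto simp: balanced_rep_def)
    next
      case False
      then obtain lp lm where "balanced_rep m lp lm"
        using 1 less by fastforce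
      then have "balanced_rep n (3 * lp + 0) (3 * lm + 0)"
        by (rule balanced_rep_append_digit) (simp_all add: 1)
      then show ?thesis
        by blast
    qed
  next
    case (2 m)
    then obtain lp lm where "balanced_rep m lp lm"
      using less by fastforce
    then have "balanced_rep n (3 * lp + 1) (3 * lm + 0)"
      by (rule balanced_rep_append_digit) (simp_all add: 2)
    then show ?thesis
      by blast
  next
    case (3 m)
    then obtain lp lm where "balanced_rep (m + 1) lp lm"
      using less by fastforce
    then have "balanced_rep n (3 * lp + 0) (3 * lm + 1)"
      by (rule balanced_rep_append_digit) (simp_all add: 3)
    then show ?thesis
      by blast
  qed
qed

text \<open>No carries occur in \<open>\<ell>\<^sup>+ + \<ell>\<^sup>-\<close>, so the last digits of \<open>\<ell>\<^sup>+\<close> and \<open>\<ell>\<^sup>-\<close> are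
  \<open>0\<close> or \<open>1\<close>, not both \<open>1\<close>, and hence determined by \<open>n mod 3\<close>.\<close>
lemma balanced_rep_div3:
  assumes "balanced_rep n lp lm"
  shows "balanced_rep ((n + 1) div 3) (lp div 3) (lm div 3)"
    and "lp mod 3 = (if n mod 3 = 1 then 1 else 0)"
    and "lm mod 3 = (if n mod 3 = 2 then 1 else 0)"
proof -
  define u v dp dm where "u = lp div 3" and "v = lm div 3" and "dp = lp mod 3" and "dm = lm mod 3"
  have lp: "lp = 3 * u + dp" and lm: "lm = 3 * v + dm"
    by (simp_all add: u_def v_def dp_def dm_def)
  have N2: "lp \<in> N2" "lm \<in> N2" "lp + lm \<in> N2" and n: "int n = int lp - int lm"
    using assms by (simp_all add: balanced_rep_def)
  have "dp \<noteq> 2" "dm \<noteq> 2" "(dp + dm) mod 3 \<noteq> 2" "dp < 3" "dm < 3"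
    using N2 N2_iff[of lp] N2_iff[of lm] N2_iff[of "lp + lm"]
    by (simp_all add: u_def v_def dp_def dm_def mod_add_eq)
  then have digits: "dp + dm < 2"
    by presburger
  have "lp + lm = 3 * (u + v) + (dp + dm)"
    using lp lm by simp
  moreover have "dp < 2" "dm < 2"
    using digits by simp_all
  ultimately have "u \<in> N2" "v \<in> N2" "u + v \<in> N2"
    using N2 lp lm digits N2_3_mult_plus_iff by metis+
  moreover have "int n = 3 * (int u - int v) + int dp - int dm"
    using n lp lm by simp
  then have "int ((n + 1) div 3) = int u - int v"
    and "dp = (if n mod 3 = 1 then 1 else 0)"
    and "dm = (if n mod 3 = 2 then 1 else 0)"
    using digits by presburger+
  ultimately show "balanced_rep ((n + 1) div 3) (lp div 3) (lm div 3)"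
    and "lp mod 3 = (if n mod 3 = 1 then 1 else 0)"
    and "lm mod 3 = (if n mod 3 = 2 then 1 else 0)"
    by (simp_all add: balanced_rep_def u_def[symmetric] v_def[symmetric] dp_def[symmetric] dm_def[symmetric])
qed

lemma balanced_rep_unique:
  "balanced_rep n lp lm \<Longrightarrow> balanced_rep n lp' lm' \<Longrightarrow> lp = lp' \<and> lm = lm'"
proof (induction "lp + lm + lp' + lm'" arbitrary: n lp lm lp' lm' rule: less_induct)
  case less
  show ?case
  proof (cases "lp + lm + lp' + lm' = 0")
    case False
    then have "lp div 3 + lm div 3 + lp' div 3 + lm' div 3 < lp + lm + lp' + lm'"
      by linarith
    then have "lp div 3 = lp' div 3 \<and> lm div 3 = lm' div 3"
      using less.hyps less.prems balanced_rep_div3(1) by blast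
    moreover have "lp mod 3 = lp' mod 3" "lm mod 3 = lm' mod 3"
      using less.prems balanced_rep_div3(2,3) by metis+
    ultimately show ?thesis
      by (metis div_mult_mod_eq)
  qed simp
qed

lemma ell_eq: "balanced_rep n lp lm \<Longrightarrow> ell n = lp + lm"
proof -
  assume rep: "balanced_rep n lp lm"
  have "ell_pair n = (lp, lm)"
    unfolding ell_pair_def
    using rep balanced_rep_unique[OF rep] by (intro the_equality) (auto simp: balanced_rep_def)
  then show ?thesis
    by (simp add: ell_def)
qed

lemma ell_3: "ell (3 * m) = 3 * ell m"
proof -
  obtain lp lm where rep: "balanced_rep m lp lm"
    using balanced_rep_exists by blast
  then have "balanced_rep (3 * m) (3 * lp + 0) (3 * lm + 0)"
    by (rule balanced_rep_append_digit) simp_all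
  then show ?thesis
    using rep by (simp add: ell_eq)
qed

lemma ell_3_plus_1: "ell (3 * m + 1) = 3 * ell m + 1"
proof -
  obtain lp lm where rep: "balanced_rep m lp lm"
    using balanced_rep_exists by blast
  then have "balanced_rep (3 * m + 1) (3 * lp + 1) (3 * lm + 0)"
    by (rule balanced_rep_append_digit) simp_all
  then show ?thesis
    using rep by (simp add: ell_eq)
qed

lemma ell_3_plus_2: "ell (3 * m + 2) = 3 * ell (m + 1) + 1"
proof -
  obtain lp lm where rep: "balanced_rep (m + 1) lp lm"
    using balanced_rep_exists by blast
  then have "balanced_rep (3 * m + 2) (3 * lp + 0) (3 * lm + 1)"
    by (rule balanced_rep_append_digit) simp_all
  then show ?thesis
    using rep by (simp add: ell_eq)
qed

lemma ell_Suc_diff: "int (ell (Suc n)) - int (ell n) = w n * a n"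
proof (induction n rule: less_induct)
  case (less n)
  show ?case
  proof (cases n rule: nat_mod3_cases)
    case (1 m)
    then show ?thesis
      using ell_3[of m] ell_3_plus_1[of m] w_mult_a_3[of m] by simp
  next
    case (2 m)
    then have "int (ell (Suc n)) - int (ell n) = 3 * (int (ell (Suc m)) - int (ell m))"
      using ell_3_plus_1[of m] ell_3_plus_2[of m] by simp
    also have "\<dots> = w n * a n"
      using 2 less[of m] w_mult_a_3_plus_1[of m] by simp
    finally show ?thesis .
  next
    case (3 m)
    then have "Suc n = 3 * (m + 1)"
      by simp
    then have "ell (Suc n) = 3 * ell (m + 1)"
      by (metis ell_3)
    then show ?thesis
      using 3 ell_3_plus_2[of m] w_mult_a_3_plus_2[of m] by simp
  qed
qed

lemma p_Suc: "p (Suc n) = p n + w n * a n"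
  by (simp add: p_def)

theorem mainTheorem7:
  shows "\<forall>n. p n = int (ell n)"
proof
  fix n
  show "p n = int (ell n)"
  proof (induction n)
    case 0
    have "ell 0 = 0"
      using ell_3[of 0, unfolded mult_zero_right] by linarith
    then show ?case
      by (simp add: p_def)
  next
    case (Suc n)
    then show ?case
      using p_Suc[of n] ell_Suc_diff[of n] by simp
  qed
qed

end
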